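(* Let $A$ be a finite alphabet and let $Z\subseteq A^+$ be a code all of whose words have length at least $2$. If all words of $Z$ begin with the same letter of $A$, or all words of $Z$ end with the same letter of $A$, then $Z$ is an alt-induced code.
   Context: $A^+$ is the set of non-empty words over $A$. A set $Z\subseteq A^+$ is a code if every word admits at most one factorization into words of $Z$. For non-empty $X,Y\subseteq A^+$, $(X,Y)$ is an alternative code if no word of $A^+$ admits two different similar alternative factorizations on $(X,Y)$, where an alternative factorization is a factorization $u_1\cdots u_n$ ($n\ge 2$, $u_i\in X\cup Y$) with consecutive factors alternating between $X$ and $Y$, and two are similar if they begin in the same set and end in the same set; equivalently, $XY$ is a code and each $z\in XY$ has exactly one pair $(x,y)\in X\times Y$ with $z=xy$. $Z$ is an alt-induced code if $Z=XY$ for some alternative code $(X,Y)$. *)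

theory Defs
  imports Main
begin

definition plus_words :: "'a set \<Rightarrow> 'a list set" where
  "plus_words A = {w. w \<noteq> [] \<and> set w \<subseteq> A}"

definition is_code :: "'a set \<Rightarrow> 'a list set \<Rightarrow> bool" where
  "is_code A Z \<longleftrightarrow> Z \<subseteq> plus_words A \<and>
     (\<forall>us vs. set us \<subseteq> Z \<and> set vs \<subseteq> Z \<and> concat us = concat vs \<longrightarrow> us = vs)"

definition lang_prod :: "'a list set \<Rightarrow> 'a list set \<Rightarrow> 'a list set" where
  "lang_prod X Y = {x @ y | x y. x \<in> X \<and> y \<in> Y}"

text \<open>Alternative factorization on (X,Y): factors u_0,...,u_{n-1}, n >= 2, alternating
  between X and Y; the flag b says whether it begins in X (True) or in Y (False).  It ends in the same set as another
  alternative factorization with the same starting set iff the lengths have equal parity.\<close>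
definition alt_fact :: "'a list set \<Rightarrow> 'a list set \<Rightarrow> bool \<Rightarrow> 'a list list \<Rightarrow> bool" where
  "alt_fact X Y b us \<longleftrightarrow> length us \<ge> 2 \<and>
     (\<forall>i < length us. us ! i \<in> (if even i = b then X else Y))"

definition alternative_code :: "'a set \<Rightarrow> 'a list set \<Rightarrow> 'a list set \<Rightarrow> bool" where
  "alternative_code A X Y \<longleftrightarrow>
     X \<noteq> {} \<and> Y \<noteq> {} \<and> X \<subseteq> plus_words A \<and> Y \<subseteq> plus_words A \<and>
     (\<forall>b us vs. alt_fact X Y b us \<and> alt_fact X Y b vs \<and>
        even (length us) = even (length vs) \<and> concat us = concat vs \<longrightarrow> us = vs)"

definition alt_induced_code :: "'a set \<Rightarrow> 'a list set \<Rightarrow> bool" where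
  "alt_induced_code A Z \<longleftrightarrow> (\<exists>X Y. alternative_code A X Y \<and> Z = lang_prod X Y)"

end

theory Submission
  imports Defs
begin

text \<open>If all words of Z begin with the letter a, then Z = {a}Y with Y the set of their tails
  (dually for a common last letter), and a product whose left (right) factor is a single word
  splits its words uniquely. It remains to see that (X,Y) is an alternative code as soon as
  XY is a code with unique splitting: an alternating factorization becomes one in (XY)^*
  after putting a fixed x in front when it begins in Y and a fixed y behind when it ends
  in X; similar factorizations receive the same padding, so the code property of XY
  identifies them.\<close>

definition alternating :: "'a list set \<Rightarrow> 'a list set \<Rightarrow> bool \<Rightarrow> 'a list list \<Rightarrow> bool" where
  "alternating X Y b us \<longleftrightarrow> (\<forall>i < length us. us ! i \<in> (if even i = b then X else Y))"

lemma alt_fact_iff_alternating: "alt_fact X Y b us \<longleftrightarrow> length us \<ge> 2 \<and> alternating X Y b us"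
  by (simp add: alt_fact_def alternating_def)

lemma alternating_Nil [simp]: "alternating X Y b []"
  by (simp add: alternating_def)

lemma alternating_Cons [simp]:
  "alternating X Y b (u # us) \<longleftrightarrow> u \<in> (if b then X else Y) \<and> alternating X Y (\<not> b) us"
  unfolding alternating_def
  by (simp only: length_Cons All_less_Suc2 nth_Cons_0 nth_Cons_Suc even_Suc) simp

lemma alternating_append [simp]:
  "alternating X Y b (us @ vs) \<longleftrightarrow>
     alternating X Y b us \<and> alternating X Y (even (length us) = b) vs"
  by (induction us arbitrary: b) auto

lemma alternating_even_pairs:
  assumes "alternating X Y True us" and "even (length us)"
  shows "\<exists>ps. set ps \<subseteq> X \<times> Y \<and> us = concat (map (\<lambda>(x, y). [x, y]) ps)"
  using assms
proof (induction us rule: induct_list012)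
  case 1
  show ?case by (intro exI[of _ "[]"]) simp
next
  case (2 x)
  then show ?case by simp
next
  case (3 x y zs)
  then obtain ps where "set ps \<subseteq> X \<times> Y" "zs = concat (map (\<lambda>(x, y). [x, y]) ps)"
    by auto
  with 3 show ?case by (intro exI[of _ "(x, y) # ps"]) auto
qed

lemma concat_concat_pairs:
  "concat (concat (map (\<lambda>(x, y). [x, y]) ps)) = concat (map (\<lambda>(x, y). x @ y) ps)"
  by (induction ps) auto

lemma alternating_even_unique:
  assumes code: "is_code A (lang_prod X Y)" and inj: "inj_on (\<lambda>(x, y). x @ y) (X \<times> Y)"
    and "alternating X Y True us" "even (length us)"
    and "alternating X Y True vs" "even (length vs)"
    and eq: "concat us = concat vs"
  shows "us = vs"
proof -
  obtain ps where ps: "set ps \<subseteq> X \<times> Y" "us = concat (map (\<lambda>(x, y). [x, y]) ps)"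
    using alternating_even_pairs assms by blast
  obtain qs where qs: "set qs \<subseteq> X \<times> Y" "vs = concat (map (\<lambda>(x, y). [x, y]) qs)"
    using alternating_even_pairs assms by blast
  have "set (map (\<lambda>(x, y). x @ y) ps) \<subseteq> lang_prod X Y"
    "set (map (\<lambda>(x, y). x @ y) qs) \<subseteq> lang_prod X Y"
    using ps(1) qs(1) by (auto simp: lang_prod_def)
  moreover have "concat (map (\<lambda>(x, y). x @ y) ps) = concat (map (\<lambda>(x, y). x @ y) qs)"
    using eq ps(2) qs(2) by (simp add: concat_concat_pairs)
  ultimately have "map (\<lambda>(x, y). x @ y) ps = map (\<lambda>(x, y). x @ y) qs"
    using code unfolding is_code_def by blast
  then have "ps = qs"
    by (rule map_inj_on) (use inj ps(1) qs(1) in \<open>auto intro: inj_on_subset\<close>)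
  with ps qs show ?thesis by simp
qed

lemma alternative_codeI:
  assumes "x \<in> X" "y \<in> Y" "X \<subseteq> plus_words A" "Y \<subseteq> plus_words A"
    and code: "is_code A (lang_prod X Y)" and inj: "inj_on (\<lambda>(x, y). x @ y) (X \<times> Y)"
  shows "alternative_code A X Y"
  unfolding alternative_code_def
proof (intro conjI allI impI)
  fix b us vs
  assume "alt_fact X Y b us \<and> alt_fact X Y b vs \<and>
    even (length us) = even (length vs) \<and> concat us = concat vs"
  then have us: "alternating X Y b us" and vs: "alternating X Y b vs"
    and parity: "even (length us) = even (length vs)" and eq: "concat us = concat vs"
    by (auto simp: alt_fact_iff_alternating)
  define pre where "pre = (if b then [] else [x])"
  define suf where "suf = (if even (length us) = b then [] else [y])"
  have "alternating X Y True (pre @ us @ suf)" "even (length (pre @ us @ suf))"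
    "alternating X Y True (pre @ vs @ suf)" "even (length (pre @ vs @ suf))"
    using us vs parity \<open>x \<in> X\<close> \<open>y \<in> Y\<close> by (auto simp: pre_def suf_def)
  moreover have "concat (pre @ us @ suf) = concat (pre @ vs @ suf)"
    using eq by simp
  ultimately have "pre @ us @ suf = pre @ vs @ suf"
    using alternating_even_unique[OF code inj] by blast
  then show "us = vs" by simp
qed (use assms in auto)

lemma alt_induced_codeI:
  assumes "is_code A Z" and "Z = lang_prod X Y" and "X \<noteq> {}" "Y \<noteq> {}"
    and "X \<subseteq> plus_words A" "Y \<subseteq> plus_words A"
    and "inj_on (\<lambda>(x, y). x @ y) (X \<times> Y)"
  shows "alt_induced_code A Z"
  using assms alternative_codeI[of _ X _ Y A] unfolding alt_induced_code_def by blast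

lemma lang_prod_singleton_tl:
  assumes "\<forall>z\<in>Z. z \<noteq> [] \<and> hd z = a"
  shows "Z = lang_prod {[a]} (tl ` Z)"
proof -
  have "z = [a] @ tl z" if "z \<in> Z" for z
    using assms that by (cases z) auto
  then show ?thesis unfolding lang_prod_def by force
qed

lemma lang_prod_butlast_singleton:
  assumes "\<forall>z\<in>Z. z \<noteq> [] \<and> last z = a"
  shows "Z = lang_prod (butlast ` Z) {[a]}"
proof -
  have "z = butlast z @ [a]" if "z \<in> Z" for z
    using assms that by (metis append_butlast_last_id)
  then show ?thesis unfolding lang_prod_def by force
qed

lemma tl_in_plus_words: "z \<in> plus_words A \<Longrightarrow> length z \<ge> 2 \<Longrightarrow> tl z \<in> plus_words A"
  by (cases z) (auto simp: plus_words_def)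

lemma butlast_in_plus_words:
  "z \<in> plus_words A \<Longrightarrow> length z \<ge> 2 \<Longrightarrow> butlast z \<in> plus_words A"
  by (cases z rule: rev_cases) (auto simp: plus_words_def)

theorem corollaryC:
  fixes A :: "'a set" and Z :: "'a list set"
  assumes "finite A"
    and "is_code A Z"
    and "Z \<noteq> {}"
    and "\<forall>z\<in>Z. length z \<ge> 2"
    and "(\<exists>a\<in>A. \<forall>z\<in>Z. hd z = a) \<or> (\<exists>a\<in>A. \<forall>z\<in>Z. last z = a)"
  shows "alt_induced_code A Z"
proof -
  have words: "Z \<subseteq> plus_words A" and nonempty: "\<forall>z\<in>Z. z \<noteq> []"
    using assms(2,4) by (auto simp: is_code_def)
  have letter: "a \<in> A \<Longrightarrow> {[a]} \<subseteq> plus_words A" for a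
    by (simp add: plus_words_def)
  from assms(5) show ?thesis
  proof (elim disjE bexE)
    fix a assume "a \<in> A" "\<forall>z\<in>Z. hd z = a"
    then have "Z = lang_prod {[a]} (tl ` Z)"
      using nonempty by (intro lang_prod_singleton_tl) blast
    moreover have "tl ` Z \<subseteq> plus_words A"
      using words assms(4) tl_in_plus_words by blast
    ultimately show ?thesis
      using assms(2,3) letter[OF \<open>a \<in> A\<close>]
      by (intro alt_induced_codeI[of A Z "{[a]}" "tl ` Z"]) (auto simp: inj_on_def)
  next
    fix a assume "a \<in> A" "\<forall>z\<in>Z. last z = a"
    then have "Z = lang_prod (butlast ` Z) {[a]}"
      using nonempty by (intro lang_prod_butlast_singleton) blast
    moreover have "butlast ` Z \<subseteq> plus_words A"
      using words assms(4) butlast_in_plus_words by blast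
    ultimately show ?thesis
      using assms(2,3) letter[OF \<open>a \<in> A\<close>]
      by (intro alt_induced_codeI[of A Z "butlast ` Z" "{[a]}"]) (auto simp: inj_on_def)
  qed
qed

end
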